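(* Let $I\subseteq\mathbb{R}$ be an interval, $p\in I$, and let $f: I\to\mathbb{R}$ be continuous such that one of the following holds: (i) $f|_{]-\infty,p]\cap I}$ and $f|_{[p,\infty[\cap I}$ are both convex; (ii) $f|_{]-\infty,p]\cap I}$ and $f|_{[p,\infty[\cap I}$ are both concave; (iii) $f|_{]-\infty,p]\cap I}$ is convex and $f|_{[p,\infty[\cap I}$ is concave; (iv) $f|_{]-\infty,p]\cap I}$ is concave and $f|_{[p,\infty[\cap I}$ is convex. Then $f$ is star-convex and $p$ is a center of $f$.
   Context: A function $f: I\to\mathbb{R}$ is star-convex if there exists $p\in I$ (a center) such that for every $x\in I$, either $f(tx+(1-t)p)\leq tf(x)+(1-t)f(p)$ for all $t\in[0,1]$, or $f(tx+(1-t)p)\geq tf(x)+(1-t)f(p)$ for all $t\in[0,1]$; i.e. for each $x$ the segment joining $(x,f(x))$ and $(p,f(p))$ lies entirely in the epigraph or entirely in the hypograph of $f$. *)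

theory Defs
  imports "HOL-Analysis.Analysis"
begin

definition star_center :: "(real \<Rightarrow> real) \<Rightarrow> real set \<Rightarrow> real \<Rightarrow> bool" where
  "star_center f I p \<longleftrightarrow> p \<in> I \<and>
     (\<forall>x\<in>I. (\<forall>t\<in>{0..1}. f (t * x + (1 - t) * p) \<le> t * f x + (1 - t) * f p)
          \<or> (\<forall>t\<in>{0..1}. f (t * x + (1 - t) * p) \<ge> t * f x + (1 - t) * f p))"

definition star_convex :: "(real \<Rightarrow> real) \<Rightarrow> real set \<Rightarrow> bool" where
  "star_convex f I \<longleftrightarrow> (\<exists>p\<in>I. star_center f I p)"

end

theory Submission
  imports Defs
begin

text \<open>For \<open>x \<le> p\<close> both \<open>x\<close> and \<open>p\<close> lie in the left half \<open>{..p} \<inter> I\<close>, on which \<open>f\<close> is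
convex or concave, so the chord from \<open>(x, f x)\<close> to \<open>(p, f p)\<close> lies entirely above or entirely
below the graph; symmetrically for \<open>x \<ge> p\<close>.\<close>

lemma convex_on_chord_le:
  fixes f :: "real \<Rightarrow> real"
  assumes "convex_on S f" "x \<in> S" "p \<in> S"
  shows "\<forall>t\<in>{0..1}. f (t * x + (1 - t) * p) \<le> t * f x + (1 - t) * f p"
proof
  fix t :: real assume "t \<in> {0..1}"
  then have "f ((1 - t) *\<^sub>R p + t *\<^sub>R x) \<le> (1 - t) * f p + t * f x"
    using convex_onD[OF assms(1)] assms(2,3) by auto
  then show "f (t * x + (1 - t) * p) \<le> t * f x + (1 - t) * f p"
    by (simp add: algebra_simps)
qed

lemma concave_on_chord_ge:
  fixes f :: "real \<Rightarrow> real"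
  assumes "concave_on S f" "x \<in> S" "p \<in> S"
  shows "\<forall>t\<in>{0..1}. f (t * x + (1 - t) * p) \<ge> t * f x + (1 - t) * f p"
  using convex_on_chord_le[of S "\<lambda>y. - f y" x p] assms by (auto simp: concave_on_def)

lemma star_center_if_halves_convex_or_concave:
  fixes f :: "real \<Rightarrow> real"
  assumes "p \<in> I"
    and left: "convex_on ({..p} \<inter> I) f \<or> concave_on ({..p} \<inter> I) f"
    and right: "convex_on ({p..} \<inter> I) f \<or> concave_on ({p..} \<inter> I) f"
  shows "star_center f I p"
  unfolding star_center_def
proof (intro conjI ballI)
  show "p \<in> I" by fact
  fix x assume "x \<in> I"
  obtain S where "x \<in> S" "p \<in> S" and S: "convex_on S f \<or> concave_on S f"
  proof (cases "x \<le> p")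
    case True
    with that[OF _ _ left] show ?thesis using \<open>x \<in> I\<close> \<open>p \<in> I\<close> by simp
  next
    case False
    with that[OF _ _ right] show ?thesis using \<open>x \<in> I\<close> \<open>p \<in> I\<close> by simp
  qed
  with S show "(\<forall>t\<in>{0..1}. f (t * x + (1 - t) * p) \<le> t * f x + (1 - t) * f p)
      \<or> (\<forall>t\<in>{0..1}. f (t * x + (1 - t) * p) \<ge> t * f x + (1 - t) * f p)"
    using convex_on_chord_le concave_on_chord_ge by blast
qed

theorem proposition4p1:
  fixes f :: "real \<Rightarrow> real" and I :: "real set" and p :: real
  assumes "is_interval I" and "p \<in> I" and "continuous_on I f"
    and "(convex_on ({..p} \<inter> I) f \<and> convex_on ({p..} \<inter> I) f)
       \<or> (concave_on ({..p} \<inter> I) f \<and> concave_on ({p..} \<inter> I) f)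
       \<or> (convex_on ({..p} \<inter> I) f \<and> concave_on ({p..} \<inter> I) f)
       \<or> (concave_on ({..p} \<inter> I) f \<and> convex_on ({p..} \<inter> I) f)"
  shows "star_convex f I \<and> star_center f I p"
proof -
  have "star_center f I p"
    using assms(4) by (intro star_center_if_halves_convex_or_concave[OF \<open>p \<in> I\<close>]) blast+
  then show ?thesis
    unfolding star_convex_def using \<open>p \<in> I\<close> by blast
qed

end
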